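(* Let $\sigma^*$ be a function on $V$ with $0<\sigma^*_{\min}\le\sigma^*({\bf r})\le\sigma^*_{\max}$ for all ${\bf r}\in V$. Then the operator $\mathcal{K}\sigma^*$ (multiplication by $\sigma^*$ followed by $\mathcal{K}$), acting on $L^2(V)$ equipped with the weighted norm $\|\cdot\|_{L^2(V,\sigma)}$, satisfies $$\|\mathcal{K}\sigma^*\|_{L^2(V,\sigma)}\le\Big\|\frac{\sigma^*}{\sigma}\Big\|_{L^\infty(V)}.$$
   Context: Setting: $V\subset\mathbb{R}^3$ is a bounded convex domain, and $\mathbb{S}^2$ is the unit sphere in $\mathbb{R}^3$. The scattering and absorption cross-sections $\sigma_S,\sigma_A$ are functions on $V$ satisfying $0<(\sigma_S)_{\min}\le\sigma_S({\bf r})\le(\sigma_S)_{\max}$ and $0<(\sigma_A)_{\min}\le\sigma_A({\bf r})\le(\sigma_A)_{\max}$ for all ${\bf r}\in V$, and the total cross-section is $\sigma=\sigma_S+\sigma_A$, so $0<\sigma_{\min}\le\sigma({\bf r})\le\sigma_{\max}$. The optical path length is $\tau({\bf r},{\bf r}')=\int_{l({\bf r},{\bf r}')}\sigma({\bf z})\,\mathrm{d}{\bf z}$, the integral of $\sigma$ along the line segment $l({\bf r},{\bf r}')$ joining ${\bf r}$ and ${\bf r}'$. The integral operator $\mathcal{K}$ is $(\mathcal{K}v)({\bf r})=\int_V k({\bf r},{\bf r}')v({\bf r}')\,\mathrm{d}{\bf r}'$ with kernel $k({\bf r},{\bf r}')=\dfrac{\exp(-\tau({\bf r},{\bf r}'))}{4\pi\|{\bf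 r}-{\bf r}'\|_2^2}$. For a weight $w$ bounded above and below by positive constants, $\|v\|_{L^2(V,w)}^2=\int_V|v({\bf r})|^2w({\bf r})\,\mathrm{d}{\bf r}$; the operator norm on the left is with respect to this norm with $w=\sigma$. *)

theory Defs
  imports "HOL-Analysis.Analysis" "HOL-Probability.Essential_Supremum"
begin

definition optical_path :: "(real^3 \<Rightarrow> real) \<Rightarrow> real^3 \<Rightarrow> real^3 \<Rightarrow> real" where
  "optical_path \<sigma> r r' = (LBINT t=0..1. \<sigma> (r + t *\<^sub>R (r' - r)) * norm (r' - r))"

definition kern :: "(real^3 \<Rightarrow> real) \<Rightarrow> real^3 \<Rightarrow> real^3 \<Rightarrow> real" where
  "kern \<sigma> r r' = exp (- optical_path \<sigma> r r') / (4 * pi * (norm (r - r'))\<^sup>2)"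

definition Kop :: "(real^3 \<Rightarrow> real) \<Rightarrow> (real^3) set \<Rightarrow> (real^3 \<Rightarrow> real) \<Rightarrow> real^3 \<Rightarrow> real" where
  "Kop \<sigma> V v r = (LINT r':V|lebesgue. kern \<sigma> r r' * v r')"

definition L2w_sq :: "(real^3) set \<Rightarrow> (real^3 \<Rightarrow> real) \<Rightarrow> (real^3 \<Rightarrow> real) \<Rightarrow> ennreal" where
  "L2w_sq V w v = (\<integral>\<^sup>+ r. indicator V r * ennreal ((v r)\<^sup>2 * w r) \<partial>lebesgue)"

definition Linf_norm :: "(real^3) set \<Rightarrow> (real^3 \<Rightarrow> real) \<Rightarrow> ereal" where
  "Linf_norm V f = esssup (restrict_space lebesgue V) (\<lambda>r. ereal \<bar>f r\<bar>)"

end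

theory Submission
  imports Defs
begin

text \<open>Two facts about the kernel drive the estimate. It is symmetric, and every row
  satisfies \<open>\<integral> k(r,x) \<sigma>(x) dx \<le> 1\<close>: in polar coordinates around \<open>r\<close> the factor
  \<open>1/(4\<pi>|x - r|\<^sup>2)\<close> cancels the Jacobian, and along each ray what remains is
  \<open>\<sigma> exp(-\<tau>)\<close>, the derivative of \<open>1 - exp(-\<tau>)\<close>, whose integral is at most one.
  Cauchy-Schwarz against the weight \<open>\<sigma>\<close>, followed by Tonelli and the symmetry of \<open>k\<close>, then
  gives the Schur-type bound \<open>\<integral> \<sigma> (K f)\<^sup>2 \<le> \<integral> f\<^sup>2/\<sigma>\<close>; with \<open>f = \<sigma>\<^sup>* v\<close> the ratio
  \<open>(\<sigma>\<^sup>*/\<sigma>)\<^sup>2\<close> is bounded by the square of its essential supremum.\<close>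

lemma exp_neg_le_quadratic:
  fixes d :: real
  assumes "0 \<le> d"
  shows "exp (- d) \<le> 1 - d + d\<^sup>2 / 2"
proof -
  let ?f = "\<lambda>x::real. 1 - x + x\<^sup>2 / 2 - exp (- x)"
  have "?f 0 \<le> ?f d"
  proof (rule DERIV_nonneg_imp_nondecreasing[OF assms])
    fix x :: real
    have "DERIV ?f x :> (- 1 + x + exp (- x))"
      by (rule derivative_eq_intros refl | simp)+
    moreover have "0 \<le> - 1 + x + exp (- x)"
      using exp_ge_add_one_self[of "- x"] by linarith
    ultimately show "\<exists>y. DERIV ?f x :> y \<and> 0 \<le> y" by blast
  qed
  then show ?thesis by simp
qed

lemma bounded_borel_integrable_on_interval:
  fixes f :: "real \<Rightarrow> real"
  assumes "f \<in> borel_measurable borel" and "\<And>x. \<bar>f x\<bar> \<le> B"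
  shows "f integrable_on {a..b}"
proof -
  have "set_integrable lborel {a..b} f"
    unfolding set_integrable_def
    using assms by (intro integrableI_bounded_set_indicator[where B=B]) (auto simp: emeasure_lborel_Icc_eq)
  then show ?thesis by (rule set_borel_integral_eq_integral(1))
qed

lemma mono_integral_from_zero:
  fixes g :: "real \<Rightarrow> real"
  assumes "\<And>a b. g integrable_on {a..b}" and "\<And>x. 0 \<le> g x"
  shows "mono (\<lambda>x. integral {0..x} g)"
proof
  fix x y :: real
  assume "x \<le> y"
  then show "integral {0..x} g \<le> integral {0..y} g"
    using assms by (cases "0 \<le> x") (auto intro!: integral_subset_le integral_nonneg)
qed

text \<open>The attenuated density \<open>g(u) exp(-\<integral>\<^sub>0\<^sup>u g)\<close> is the derivative of
  \<open>1 - exp(-\<integral>\<^sub>0\<^sup>u g)\<close>. Since \<open>g\<close> is only measurable we cannot differentiate;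
  instead, on each cell of width \<open>d\<close> the attenuation drops by a factor
  \<open>exp(-\<delta>) \<le> 1 - \<delta> + \<delta>\<^sup>2/2\<close> while the density contributes at most \<open>\<delta>\<close> times it.\<close>
lemma attenuated_integral_cells_bound:
  fixes g :: "real \<Rightarrow> real"
  defines "G \<equiv> \<lambda>x. integral {0..x} g"
  assumes g_int: "\<And>a b. g integrable_on {a..b}"
    and h_int: "\<And>a b. (\<lambda>u. g u * exp (- G u)) integrable_on {a..b}"
    and g_nonneg: "\<And>x. 0 \<le> g x" and g_le: "\<And>x. g x \<le> M" and "0 \<le> d"
  shows "integral {0..real n * d} (\<lambda>u. g u * exp (- G u)) + exp (- G (real n * d))
           \<le> 1 + real n * (M * d)\<^sup>2 / 2"
proof (induction n)
  case 0
  then show ?case by (simp add: G_def)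
next
  case (Suc n)
  define s t where "s = real n * d" and "t = real (Suc n) * d"
  define \<delta> where "\<delta> = integral {s..t} g"
  have "0 \<le> s" "s \<le> t" using \<open>0 \<le> d\<close> by (simp_all add: s_def t_def algebra_simps)
  have "0 \<le> \<delta>" unfolding \<delta>_def using g_int g_nonneg by (rule integral_nonneg)
  have "\<delta> \<le> integral {s..t} (\<lambda>_. M)"
    unfolding \<delta>_def using g_int g_le by (intro integral_le) auto
  then have "\<delta> \<le> M * d" using \<open>s \<le> t\<close> by (simp add: s_def t_def algebra_simps)
  have G_t: "G t = G s + \<delta>"
    unfolding G_def \<delta>_def using Henstock_Kurzweil_Integration.integral_combine[OF \<open>0 \<le> s\<close> \<open>s \<le> t\<close> g_int] by simp
  have "G s \<le> G u" if "u \<in> {s..t}" for u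
    using mono_integral_from_zero[OF g_int g_nonneg] that unfolding G_def mono_def by auto
  then have "integral {s..t} (\<lambda>u. g u * exp (- G u)) \<le> integral {s..t} (\<lambda>u. g u * exp (- G s))"
    using h_int g_int g_nonneg by (intro integral_le integrable_on_mult_left) (auto intro: mult_left_mono)
  then have cell: "integral {s..t} (\<lambda>u. g u * exp (- G u)) \<le> \<delta> * exp (- G s)"
    by (simp add: \<delta>_def)
  have "exp (- G t) = exp (- G s) * exp (- \<delta>)"
    by (simp add: G_t exp_add[symmetric])
  also have "\<dots> \<le> exp (- G s) * (1 - \<delta> + \<delta>\<^sup>2 / 2)"
    by (intro mult_left_mono exp_neg_le_quadratic \<open>0 \<le> \<delta>\<close>) simp
  finally have decay: "exp (- G t) \<le> exp (- G s) * (1 - \<delta> + \<delta>\<^sup>2 / 2)" .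
  have "exp (- G s) \<le> 1"
    using integral_nonneg[OF g_int g_nonneg] by (simp add: G_def)
  moreover have "\<delta>\<^sup>2 \<le> (M * d)\<^sup>2"
    using \<open>0 \<le> \<delta>\<close> \<open>\<delta> \<le> M * d\<close> by (intro power_mono) auto
  ultimately have error: "exp (- G s) * (\<delta>\<^sup>2 / 2) \<le> (M * d)\<^sup>2 / 2"
    using mult_mono[of "exp (- G s)" 1 "\<delta>\<^sup>2 / 2" "(M * d)\<^sup>2 / 2"] by simp
  have "exp (- G s) * (1 - \<delta> + \<delta>\<^sup>2 / 2) = exp (- G s) - \<delta> * exp (- G s) + exp (- G s) * (\<delta>\<^sup>2 / 2)"
    by (simp add: algebra_simps)
  moreover have "integral {0..t} (\<lambda>u. g u * exp (- G u))
      = integral {0..s} (\<lambda>u. g u * exp (- G u)) + integral {s..t} (\<lambda>u. g u * exp (- G u))"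
    using Henstock_Kurzweil_Integration.integral_combine[OF \<open>0 \<le> s\<close> \<open>s \<le> t\<close> h_int] by simp
  moreover have "real (Suc n) * (M * d)\<^sup>2 / 2 = real n * (M * d)\<^sup>2 / 2 + (M * d)\<^sup>2 / 2"
    by (simp add: field_simps)
  ultimately show ?case
    using Suc.IH cell decay error unfolding s_def t_def by linarith
qed

lemma borel_measurable_integral_from_zero:
  fixes g :: "real \<Rightarrow> real"
  assumes "\<And>a b. g integrable_on {a..b}" and "\<And>x. 0 \<le> g x"
  shows "(\<lambda>x. integral {0..x} g) \<in> borel_measurable borel"
  using assms by (intro borel_measurable_mono mono_integral_from_zero)

lemma attenuated_density_integrable_on:
  fixes g :: "real \<Rightarrow> real"
  assumes [measurable]: "g \<in> borel_measurable borel"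
    and g_nonneg: "\<And>x. 0 \<le> g x" and g_le: "\<And>x. g x \<le> M"
  shows "(\<lambda>u. g u * exp (- integral {0..u} g)) integrable_on {a..b}"
proof -
  have g_int: "g integrable_on {a..b}" for a b
    using g_nonneg g_le by (intro bounded_borel_integrable_on_interval[where B=M]) auto
  have [measurable]: "(\<lambda>x. integral {0..x} g) \<in> borel_measurable borel"
    using g_int g_nonneg by (rule borel_measurable_integral_from_zero)
  have "g u * exp (- integral {0..u} g) \<le> g u * 1" for u
    using g_nonneg[of u] integral_nonneg[OF g_int g_nonneg, of 0 u] by (intro mult_left_mono) auto
  then show ?thesis
    using g_nonneg g_le by (intro bounded_borel_integrable_on_interval[where B=M]) (auto intro: order_trans)
qed

lemma integral_attenuated_le_one:
  fixes g :: "real \<Rightarrow> real"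
  assumes g_meas [measurable]: "g \<in> borel_measurable borel"
    and g_nonneg: "\<And>x. 0 \<le> g x" and g_le: "\<And>x. g x \<le> M" and "0 \<le> L"
  shows "integral {0..L} (\<lambda>u. g u * exp (- integral {0..u} g)) \<le> 1"
proof -
  define G where "G = (\<lambda>x. integral {0..x} g)"
  have g_int: "g integrable_on {a..b}" for a b
    using g_nonneg g_le by (intro bounded_borel_integrable_on_interval[where B=M]) auto
  have h_int: "(\<lambda>u. g u * exp (- G u)) integrable_on {a..b}" for a b
    unfolding G_def using g_nonneg g_le by (rule attenuated_density_integrable_on[OF g_meas])
  have bound: "integral {0..L} (\<lambda>u. g u * exp (- G u)) \<le> 1 + (M * L)\<^sup>2 / 2 / real N" if "0 < N" for N
  proof -
    have "real N * (L / N) = L" using that by simp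
    then have "integral {0..L} (\<lambda>u. g u * exp (- G u)) + exp (- G L) \<le> 1 + real N * (M * (L / N))\<^sup>2 / 2"
      using attenuated_integral_cells_bound[OF g_int h_int[unfolded G_def] g_nonneg g_le, of "L / N" N]
        \<open>0 \<le> L\<close> by (simp add: G_def)
    moreover have "real N * (M * (L / N))\<^sup>2 / 2 = (M * L)\<^sup>2 / 2 / real N"
      using that by (simp add: field_simps power2_eq_square)
    ultimately show ?thesis
      using exp_gt_zero[of "- G L"] by linarith
  qed
  have "(\<lambda>N. 1 + (M * L)\<^sup>2 / 2 / real N) \<longlonglongrightarrow> 1 + 0"
    by (intro tendsto_add tendsto_const lim_const_over_n)
  then have "integral {0..L} (\<lambda>u. g u * exp (- G u)) \<le> 1 + 0"
    by (rule LIMSEQ_le_const) (use bound in \<open>auto intro!: exI[of _ 1]\<close>)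
  then show ?thesis by (simp add: G_def)
qed

lemma nn_integral_attenuated_le_one:
  fixes g :: "real \<Rightarrow> real"
  assumes g_meas [measurable]: "g \<in> borel_measurable borel"
    and g_nonneg: "\<And>x. 0 \<le> g x" and g_le: "\<And>x. g x \<le> M"
  shows "(\<integral>\<^sup>+ l. indicator {0<..} l * ennreal (g l * exp (- integral {0..l} g)) \<partial>lborel) \<le> 1"
proof -
  define h where "h = (\<lambda>u. g u * exp (- integral {0..u} g))"
  have g_int: "g integrable_on {a..b}" for a b
    using g_nonneg g_le by (intro bounded_borel_integrable_on_interval[where B=M]) auto
  have [measurable]: "(\<lambda>x. integral {0..x} g) \<in> borel_measurable borel"
    using g_int g_nonneg by (rule borel_measurable_integral_from_zero)
  have "(\<integral>\<^sup>+ l. indicator {0<..} l * ennreal (h l) \<partial>lborel)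
      \<le> (\<integral>\<^sup>+ l. (SUP n. ennreal (h l) * indicator {0..real n} l) \<partial>lborel)"
  proof (intro nn_integral_mono)
    fix l :: real
    obtain n :: nat where "l \<le> real n" using real_arch_simple by blast
    then have "indicator {0<..} l * ennreal (h l) \<le> ennreal (h l) * indicator {0..real n} l"
      by (simp add: indicator_def)
    also have "\<dots> \<le> (SUP n. ennreal (h l) * indicator {0..real n} l)"
      by (rule SUP_upper) simp
    finally show "indicator {0<..} l * ennreal (h l) \<le> (SUP n. ennreal (h l) * indicator {0..real n} l)" .
  qed
  also have "\<dots> = (SUP n. \<integral>\<^sup>+ l. ennreal (h l) * indicator {0..real n} l \<partial>lborel)"
    unfolding h_def
    by (rule nn_integral_monotone_convergence_SUP)
       (auto simp: incseq_def le_fun_def indicator_def intro!: mult_left_mono)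
  also have "\<dots> \<le> 1"
  proof (rule SUP_least)
    fix n :: nat
    have "integral {0..real n} h \<le> 1"
      unfolding h_def using g_nonneg g_le by (intro integral_attenuated_le_one) auto
    moreover have "(h has_integral integral {0..real n} h) {0..real n}"
      unfolding h_def using g_nonneg g_le
      by (intro integrable_integral attenuated_density_integrable_on[OF g_meas])
    ultimately show "(\<integral>\<^sup>+ l. ennreal (h l) * indicator {0..real n} l \<partial>lborel) \<le> 1"
      using g_nonneg by (subst nn_integral_has_integral_lebesgue') (auto simp: h_def)
  qed
  finally show ?thesis by (simp add: h_def)
qed

text \<open>The outer radius \<open>e\<close> is chosen so that \<open>\<integral>\<^sub>0\<^sup>\<infinity> 1\<^sub>A(x/l) dl/l = 1\<close>
  for every \<open>x \<noteq> 0\<close>; averaging over the radii of this annulus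
  replaces polar coordinates.\<close>
definition log_unit_annulus :: "'a::real_normed_vector set" where
  "log_unit_annulus = {y. 1 \<le> norm y \<and> norm y \<le> exp 1}"

lemma log_unit_annulus_closed: "closed log_unit_annulus"
  unfolding log_unit_annulus_def
  by (intro closed_Collect_conj closed_Collect_le continuous_intros)

lemma log_unit_annulus_borel [measurable]: "log_unit_annulus \<in> sets borel"
  using log_unit_annulus_closed by (rule borel_closed)

lemma zero_notin_log_unit_annulus: "0 \<notin> log_unit_annulus"
  unfolding log_unit_annulus_def by simp

lemma nn_integral_log_unit_annulus_dilations:
  fixes x :: "'a::real_normed_vector"
  assumes "x \<noteq> 0"
  shows "(\<integral>\<^sup>+ l. indicator {0<..} l * ennreal (1 / l) * indicator log_unit_annulus ((1 / l) *\<^sub>R x) \<partial>lborel) = 1"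
proof -
  define n where "n = norm x"
  have "0 < n" unfolding n_def using assms by simp
  have "n / exp 1 \<le> n" and "0 < n / exp 1"
    using \<open>0 < n\<close> by (simp_all add: divide_le_eq)
  have integrand: "indicator {0<..} l * ennreal (1 / l) * indicator log_unit_annulus ((1 / l) *\<^sub>R x)
      = ennreal (1 / l) * indicator {n / exp 1 .. n} l" for l :: real
  proof (cases "0 < l")
    case True
    then have "(1 / l) *\<^sub>R x \<in> log_unit_annulus \<longleftrightarrow> l \<in> {n / exp 1 .. n}"
      using \<open>0 < n\<close> by (auto simp: log_unit_annulus_def n_def[symmetric] field_simps)
    then show ?thesis using True by (simp add: indicator_def)
  next
    case False
    then show ?thesis using \<open>0 < n / exp 1\<close> by (simp add: indicator_def)
  qed
  have "((\<lambda>l. 1 / l) has_integral (ln n - ln (n / exp 1))) {n / exp 1 .. n}"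
  proof (rule fundamental_theorem_of_calculus)
    fix l assume "l \<in> {n / exp 1 .. n}"
    then have "0 < l" using \<open>0 < n / exp 1\<close> by simp
    then show "(ln has_vector_derivative 1 / l) (at l within {n / exp 1 .. n})"
      by (auto intro!: derivative_eq_intros simp: has_real_derivative_iff_has_vector_derivative[symmetric])
  qed fact
  moreover have "ln n - ln (n / exp 1) = 1" using \<open>0 < n\<close> by (simp add: ln_div)
  ultimately have "(\<integral>\<^sup>+ l. ennreal (1 / l) * indicator {n / exp 1 .. n} l \<partial>lborel) = ennreal 1"
    using \<open>0 < n / exp 1\<close> by (intro nn_integral_has_integral_lebesgue') auto
  then show ?thesis by (simp add: integrand)
qed

lemma nn_integral_lborel_scaleR:
  fixes F :: "'a::euclidean_space \<Rightarrow> ennreal"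
  assumes [measurable]: "F \<in> borel_measurable borel" and "0 < l"
  shows "(\<integral>\<^sup>+ x. F x \<partial>lborel) = ennreal (l ^ DIM('a)) * (\<integral>\<^sup>+ y. F (l *\<^sub>R y) \<partial>lborel)"
proof -
  have "(lborel::'a measure) = density (distr lborel borel (\<lambda>x. 0 + l *\<^sub>R x)) (\<lambda>_. \<bar>l\<bar> ^ DIM('a))"
    using \<open>0 < l\<close> by (intro lborel_affine) simp
  then have "(\<integral>\<^sup>+ x. F x \<partial>lborel)
      = (\<integral>\<^sup>+ x. F x \<partial>density (distr lborel borel (\<lambda>x. 0 + l *\<^sub>R x)) (\<lambda>_. \<bar>l\<bar> ^ DIM('a)))"
    by (rule arg_cong)
  also have "\<dots> = (\<integral>\<^sup>+ y. ennreal (l ^ DIM('a)) * F (l *\<^sub>R y) \<partial>lborel)"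
    using \<open>0 < l\<close> by (simp add: nn_integral_density nn_integral_distr)
  also have "\<dots> = ennreal (l ^ DIM('a)) * (\<integral>\<^sup>+ y. F (l *\<^sub>R y) \<partial>lborel)"
    by (rule nn_integral_cmult) measurable
  finally show ?thesis .
qed

text \<open>Polar coordinates in the form needed here: rays \<open>l y\<close> with \<open>y\<close> in the annulus
  cover each \<open>x \<noteq> 0\<close> with total weight one.\<close>
lemma nn_integral_log_unit_annulus_rays:
  fixes f :: "'a::euclidean_space \<Rightarrow> ennreal"
  assumes [measurable]: "f \<in> borel_measurable borel"
  shows "(\<integral>\<^sup>+ y. indicator log_unit_annulus y *
            (\<integral>\<^sup>+ l. indicator {0<..} l * ennreal (l ^ (DIM('a) - 1)) * f (l *\<^sub>R y) \<partial>lborel) \<partial>lborel)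
         = (\<integral>\<^sup>+ x. f x \<partial>lborel)"
proof -
  let ?A = "log_unit_annulus :: 'a set"
  have "(\<integral>\<^sup>+ y. indicator ?A y * (\<integral>\<^sup>+ l. indicator {0<..} l * ennreal (l ^ (DIM('a) - 1)) * f (l *\<^sub>R y) \<partial>lborel) \<partial>lborel)
      = (\<integral>\<^sup>+ y. (\<integral>\<^sup>+ l. indicator ?A y * (indicator {0<..} l * ennreal (l ^ (DIM('a) - 1)) * f (l *\<^sub>R y)) \<partial>lborel) \<partial>lborel)"
    by (intro nn_integral_cong nn_integral_cmult[symmetric]) measurable
  also have "\<dots> = (\<integral>\<^sup>+ l. (\<integral>\<^sup>+ y. indicator ?A y * (indicator {0<..} l * ennreal (l ^ (DIM('a) - 1)) * f (l *\<^sub>R y)) \<partial>lborel) \<partial>lborel)"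
    by (rule pair_sigma_finite.Fubini'[symmetric]) (simp_all add: pair_sigma_finite_def sigma_finite_lborel)
  also have "\<dots> = (\<integral>\<^sup>+ l. (\<integral>\<^sup>+ x. indicator {0<..} l * ennreal (1 / l) * indicator ?A ((1 / l) *\<^sub>R x) * f x \<partial>lborel) \<partial>lborel)"
  proof (rule nn_integral_cong)
    fix l :: real
    show "(\<integral>\<^sup>+ y. indicator ?A y * (indicator {0<..} l * ennreal (l ^ (DIM('a) - 1)) * f (l *\<^sub>R y)) \<partial>lborel)
        = (\<integral>\<^sup>+ x. indicator {0<..} l * ennreal (1 / l) * indicator ?A ((1 / l) *\<^sub>R x) * f x \<partial>lborel)"
    proof (cases "0 < l")
      case False
      then show ?thesis by (simp add: indicator_def)
    next
      case True
      have "(\<integral>\<^sup>+ x. indicator {0<..} l * ennreal (1 / l) * indicator ?A ((1 / l) *\<^sub>R x) * f x \<partial>lborel)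
          = ennreal (1 / l) * (\<integral>\<^sup>+ x. indicator ?A ((1 / l) *\<^sub>R x) * f x \<partial>lborel)"
        using True by (subst nn_integral_cmult[symmetric]) (auto simp: mult.assoc)
      also have "\<dots> = ennreal (1 / l) * ennreal (l ^ DIM('a)) * (\<integral>\<^sup>+ y. indicator ?A y * f (l *\<^sub>R y) \<partial>lborel)"
        using nn_integral_lborel_scaleR[of "\<lambda>x. indicator ?A ((1 / l) *\<^sub>R x) * f x", OF _ True] True
        by (simp add: mult.assoc)
      also have "ennreal (1 / l) * ennreal (l ^ DIM('a)) = ennreal (l ^ (DIM('a) - 1))"
        using True DIM_positive[where 'a='a]
        by (simp add: ennreal_mult[symmetric] power_eq_if[of l "DIM('a)"])
      also have "ennreal (l ^ (DIM('a) - 1)) * (\<integral>\<^sup>+ y. indicator ?A y * f (l *\<^sub>R y) \<partial>lborel)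
          = (\<integral>\<^sup>+ y. indicator ?A y * (indicator {0<..} l * ennreal (l ^ (DIM('a) - 1)) * f (l *\<^sub>R y)) \<partial>lborel)"
        using True by (subst nn_integral_cmult[symmetric]) (auto simp: ac_simps)
      finally show ?thesis ..
    qed
  qed
  also have "\<dots> = (\<integral>\<^sup>+ x. (\<integral>\<^sup>+ l. indicator {0<..} l * ennreal (1 / l) * indicator ?A ((1 / l) *\<^sub>R x) * f x \<partial>lborel) \<partial>lborel)"
    by (rule pair_sigma_finite.Fubini') (simp_all add: pair_sigma_finite_def sigma_finite_lborel)
  also have "\<dots> = (\<integral>\<^sup>+ x. f x \<partial>lborel)"
  proof (rule nn_integral_cong_AE)
    show "AE x in lborel. (\<integral>\<^sup>+ l. indicator {0<..} l * ennreal (1 / l) * indicator ?A ((1 / l) *\<^sub>R x) * f x \<partial>lborel) = f x"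
      using AE_lborel_singleton[of 0]
    proof eventually_elim
      case (elim x)
      then show ?case
        using nn_integral_log_unit_annulus_dilations[OF elim]
        by (subst nn_integral_multc) simp_all
    qed
  qed
  finally show ?thesis .
qed

lemma nn_integral_log_unit_annulus_inverse_power:
  "(\<integral>\<^sup>+ y. indicator (log_unit_annulus :: 'a::euclidean_space set) y
       * ennreal (1 / (DIM('a) * norm y ^ DIM('a))) \<partial>lborel)
     = emeasure lborel (ball (0::'a) 1)"
proof -
  let ?n = "DIM('a)"
  have ray: "ennreal (1 / (?n * norm y ^ ?n))
      = (\<integral>\<^sup>+ l. indicator {0<..} l * ennreal (l ^ (?n - 1)) * indicator (ball 0 1) (l *\<^sub>R y) \<partial>lborel)"
    if "y \<noteq> 0" for y :: 'a
  proof -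
    define b where "b = 1 / norm y"
    have "0 < b" unfolding b_def using that by simp
    have "indicator {0<..} l * ennreal (l ^ (?n - 1)) * indicator (ball (0::'a) 1) (l *\<^sub>R y)
        = ennreal (l ^ (?n - 1)) * indicator (box 0 b) l" for l :: real
      using that by (cases "0 < l") (auto simp: indicator_def b_def field_simps)
    moreover have "((\<lambda>l. l ^ (?n - 1)) has_integral (b ^ ?n / ?n - 0 ^ ?n / ?n)) {0..b}"
    proof (rule fundamental_theorem_of_calculus)
      fix l :: real
      show "((\<lambda>l. l ^ ?n / ?n) has_vector_derivative l ^ (?n - 1)) (at l within {0..b})"
        unfolding has_real_derivative_iff_has_vector_derivative[symmetric]
        by (rule derivative_eq_intros refl | simp)+
    qed (use \<open>0 < b\<close> in simp)
    then have "((\<lambda>l. l ^ (?n - 1)) has_integral (b ^ ?n / ?n)) (box 0 b)"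
      unfolding has_integral_open_interval by (simp add: cbox_interval power_0_left)
    then have "(\<integral>\<^sup>+ l. ennreal (l ^ (?n - 1)) * indicator (box 0 b) l \<partial>lborel) = ennreal (b ^ ?n / ?n)"
      by (rule nn_integral_has_integral_lebesgue'[rotated]) simp
    moreover have "b ^ ?n / ?n = 1 / (?n * norm y ^ ?n)"
      unfolding b_def by (simp add: field_simps)
    ultimately show ?thesis by simp
  qed
  have "(\<integral>\<^sup>+ y. indicator (log_unit_annulus :: 'a set) y * ennreal (1 / (?n * norm y ^ ?n)) \<partial>lborel)
      = (\<integral>\<^sup>+ y. indicator log_unit_annulus y *
           (\<integral>\<^sup>+ l. indicator {0<..} l * ennreal (l ^ (?n - 1)) * indicator (ball (0::'a) 1) (l *\<^sub>R y) \<partial>lborel) \<partial>lborel)"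
  proof (rule nn_integral_cong)
    fix y :: 'a
    show "indicator log_unit_annulus y * ennreal (1 / (?n * norm y ^ ?n))
        = indicator log_unit_annulus y *
           (\<integral>\<^sup>+ l. indicator {0<..} l * ennreal (l ^ (?n - 1)) * indicator (ball 0 1) (l *\<^sub>R y) \<partial>lborel)"
      using zero_notin_log_unit_annulus ray[of y] by (cases "y \<in> log_unit_annulus") auto
  qed
  also have "\<dots> = emeasure lborel (ball (0::'a) 1)"
    by (subst nn_integral_log_unit_annulus_rays) (auto intro: borel_measurable_indicator borel_open)
  finally show ?thesis .
qed

lemma optical_path_eq_lborel_integral:
  "optical_path \<sigma> r r' = (\<integral>t. indicator {0<..<1} t * (\<sigma> (r + t *\<^sub>R (r' - r)) * norm (r' - r)) \<partial>lborel)"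
proof -
  have "einterval 0 1 = {0<..<1::real}"
    by (metis einterval_eq_Icc zero_ereal_def one_ereal_def)
  then show ?thesis
    unfolding optical_path_def
    by (simp add: interval_lebesgue_integral_le_eq set_lebesgue_integral_def mult.assoc[symmetric])
qed

lemma borel_measurable_optical_path [measurable]:
  assumes [measurable]: "\<sigma> \<in> borel_measurable borel"
  shows "(\<lambda>p. optical_path \<sigma> (fst p) (snd p)) \<in> borel_measurable (borel \<Otimes>\<^sub>M borel)"
  unfolding optical_path_eq_lborel_integral by measurable

lemma borel_measurable_kern [measurable]:
  assumes [measurable]: "\<sigma> \<in> borel_measurable borel"
  shows "(\<lambda>p. kern \<sigma> (fst p) (snd p)) \<in> borel_measurable (borel \<Otimes>\<^sub>M borel)"
  unfolding kern_def by measurable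

lemma borel_measurable_kern_right [measurable]:
  assumes [measurable]: "\<sigma> \<in> borel_measurable borel"
  shows "kern \<sigma> r \<in> borel_measurable borel"
  using measurable_compose[OF measurable_Pair[OF measurable_const measurable_ident_sets] borel_measurable_kern]
  by (simp add: assms)

lemma optical_path_commute: "optical_path \<sigma> r r' = optical_path \<sigma> r' r"
proof -
  have "indicator {0<..<1} (1 + -1 * t) * (\<sigma> (r + (1 + -1 * t) *\<^sub>R (r' - r)) * norm (r' - r))
      = indicator {0<..<1} t * (\<sigma> (r' + t *\<^sub>R (r - r')) * norm (r - r'))" for t :: real
    by (auto simp: indicator_def algebra_simps norm_minus_commute)
  then show ?thesis
    unfolding optical_path_eq_lborel_integral
    using lborel_integral_real_affine[where c="-1" and t=1 and
        f="\<lambda>t. indicator {0<..<1} t * (\<sigma> (r + t *\<^sub>R (r' - r)) * norm (r' - r))"]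
    by simp
qed

lemma kern_commute: "kern \<sigma> r r' = kern \<sigma> r' r"
  unfolding kern_def by (simp add: optical_path_commute[of \<sigma> r r'] norm_minus_commute)

lemma kern_nonneg: "0 \<le> kern \<sigma> r r'"
  unfolding kern_def by simp

lemma kern_cong_convex:
  assumes "convex V" "r \<in> V" "r' \<in> V" "\<And>x. x \<in> V \<Longrightarrow> \<sigma> x = \<sigma>' x"
  shows "kern \<sigma> r r' = kern \<sigma>' r r'"
proof -
  have "r + t *\<^sub>R (r' - r) \<in> V" if "0 < t" "t < 1" for t :: real
    using convexD[OF assms(1-3), of "1 - t" t] that by (simp add: algebra_simps)
  then have "optical_path \<sigma> r r' = optical_path \<sigma>' r r'"
    unfolding optical_path_eq_lborel_integral
    by (intro Bochner_Integration.integral_cong refl) (auto simp: indicator_def assms(4))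
  then show ?thesis unfolding kern_def by simp
qed

lemma optical_path_along_ray:
  assumes [measurable]: "\<sigma> \<in> borel_measurable borel" and "\<And>x. \<bar>\<sigma> x\<bar> \<le> C" and "0 < l"
  shows "optical_path \<sigma> r (r + l *\<^sub>R y) = integral {0..l} (\<lambda>u. \<sigma> (r + u *\<^sub>R y) * norm y)"
proof -
  define \<phi> where "\<phi> = (\<lambda>u. \<sigma> (r + u *\<^sub>R y) * norm y)"
  have [measurable]: "\<phi> \<in> borel_measurable borel" unfolding \<phi>_def by measurable
  have \<phi>_le: "\<bar>\<phi> u\<bar> \<le> C * norm y" for u
    unfolding \<phi>_def using assms(2)[of "r + u *\<^sub>R y"] by (simp add: abs_mult mult_right_mono)
  have "optical_path \<sigma> r (r + l *\<^sub>R y) = (LBINT t=ereal 0..ereal 1. l * \<phi> (l * t))"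
    unfolding optical_path_def \<phi>_def zero_ereal_def[symmetric] one_ereal_def[symmetric]
    using \<open>0 < l\<close> by (simp add: algebra_simps)
  also have "\<dots> = integral {0..1} (\<lambda>t. l * \<phi> (l * t))"
  proof (rule interval_integral_eq_integral)
    show "set_integrable lborel {0..1} (\<lambda>t. l * \<phi> (l * t))"
      unfolding set_integrable_def using \<phi>_le \<open>0 < l\<close>
      by (intro integrableI_bounded_set_indicator[where B="l * (C * norm y)"])
         (auto simp: emeasure_lborel_Icc_eq abs_mult)
  qed simp
  also have "\<dots> = l * integral ((\<lambda>x. x / l) ` {0..l}) (\<lambda>t. \<phi> (l * t))"
    using \<open>0 < l\<close> by simp
  also have "\<dots> = integral {0..l} \<phi>"
    using \<open>0 < l\<close> by (subst integral_stretch_real) simp_all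
  finally show ?thesis unfolding \<phi>_def .
qed

lemma kern_weight_along_ray:
  fixes \<sigma> :: "real^3 \<Rightarrow> real" and r y :: "real^3"
  assumes "\<sigma> \<in> borel_measurable borel" and "\<And>x. \<bar>\<sigma> x\<bar> \<le> C" and "0 < l" and "y \<noteq> 0"
  defines "g \<equiv> \<lambda>u. \<sigma> (r + u *\<^sub>R y) * norm y"
  shows "l\<^sup>2 * (kern \<sigma> r (r + l *\<^sub>R y) * \<sigma> (r + l *\<^sub>R y))
           = g l * exp (- integral {0..l} g) / (4 * pi * norm y ^ 3)"
proof -
  have n: "norm (r - (r + l *\<^sub>R y)) = l * norm y" using \<open>0 < l\<close> by simp
  have "l\<^sup>2 * (E / (4 * pi * (l * n)\<^sup>2) * s) = s * n * E / (4 * pi * n ^ 3)"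
    if "0 < n" for E n s :: real
    using \<open>0 < l\<close> that by (simp add: field_simps power2_eq_square power3_eq_cube)
  then show ?thesis
    using \<open>y \<noteq> 0\<close>
    unfolding kern_def optical_path_along_ray[OF assms(1,2,3)] g_def n by simp
qed
text \<open>The key estimate \<open>\<integral> k(r,x) \<sigma>(x) dx \<le> 1\<close>: along each ray from \<open>r\<close> the factor
  \<open>4\<pi>|x - r|\<^sup>2\<close> cancels the Jacobian of polar coordinates, leaving an attenuated density
  of total mass at most one; the annulus then integrates to \<open>(4\<pi>)\<inverse> \<cdot> |B(0,1)| \<cdot> 3 = 1\<close>.\<close>
lemma nn_integral_kern_weight_le_one:
  assumes \<sigma>_meas [measurable]: "\<sigma> \<in> borel_measurable borel"
    and \<sigma>_nonneg: "\<And>x. 0 \<le> \<sigma> x" and \<sigma>_le: "\<And>x. \<sigma> x \<le> C"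
  shows "(\<integral>\<^sup>+ x. ennreal (kern \<sigma> r x * \<sigma> x) \<partial>lborel) \<le> 1"
proof -
  define f where "f = (\<lambda>y. ennreal (kern \<sigma> r (r + y) * \<sigma> (r + y)))"
  have [measurable]: "f \<in> borel_measurable borel" unfolding f_def by measurable
  have ray: "(\<integral>\<^sup>+ l. indicator {0<..} l * ennreal (l\<^sup>2) * f (l *\<^sub>R y) \<partial>lborel)
      \<le> ennreal (1 / (4 * pi * norm y ^ 3))" if "y \<noteq> 0" for y
  proof -
    define g where "g = (\<lambda>u. \<sigma> (r + u *\<^sub>R y) * norm y)"
    have [measurable]: "g \<in> borel_measurable borel" unfolding g_def by measurable
    have g_nonneg: "0 \<le> g u" for u unfolding g_def by (simp add: \<sigma>_nonneg)
    have g_le: "g u \<le> C * norm y" for u unfolding g_def by (simp add: \<sigma>_le mult_right_mono)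
    have g_int: "g integrable_on {a..b}" for a b
      using g_nonneg g_le by (intro bounded_borel_integrable_on_interval[where B="C * norm y"]) auto
    have [measurable]: "(\<lambda>l. integral {0..l} g) \<in> borel_measurable borel"
      using g_int g_nonneg by (rule borel_measurable_integral_from_zero)
    have "indicator {0<..} l * ennreal (l\<^sup>2) * f (l *\<^sub>R y)
        = ennreal (1 / (4 * pi * norm y ^ 3)) * (indicator {0<..} l * ennreal (g l * exp (- integral {0..l} g)))"
      for l :: real
    proof (cases "0 < l")
      case True
      have "\<bar>\<sigma> x\<bar> \<le> C" for x using \<sigma>_nonneg[of x] \<sigma>_le[of x] by simp
      from kern_weight_along_ray[OF \<sigma>_meas this True that]
      have "ennreal (l\<^sup>2) * f (l *\<^sub>R y) = ennreal (g l * exp (- integral {0..l} g) / (4 * pi * norm y ^ 3))"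
        unfolding f_def g_def using kern_nonneg[of \<sigma> r] \<sigma>_nonneg by (simp add: ennreal_mult[symmetric])
      also have "\<dots> = ennreal (1 / (4 * pi * norm y ^ 3)) * ennreal (g l * exp (- integral {0..l} g))"
        using g_nonneg[of l] by (simp add: ennreal_mult[symmetric])
      finally show ?thesis using True by (simp add: mult.assoc)
    qed simp
    then have "(\<integral>\<^sup>+ l. indicator {0<..} l * ennreal (l\<^sup>2) * f (l *\<^sub>R y) \<partial>lborel)
        = ennreal (1 / (4 * pi * norm y ^ 3))
          * (\<integral>\<^sup>+ l. indicator {0<..} l * ennreal (g l * exp (- integral {0..l} g)) \<partial>lborel)"
      by (simp add: nn_integral_cmult)
    also have "\<dots> \<le> ennreal (1 / (4 * pi * norm y ^ 3)) * 1"
      by (intro mult_left_mono nn_integral_attenuated_le_one[where M="C * norm y"]) (simp_all add: g_nonneg g_le)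
    finally show ?thesis by simp
  qed
  have "(\<integral>\<^sup>+ x. ennreal (kern \<sigma> r x * \<sigma> x) \<partial>lborel)
      = (\<integral>\<^sup>+ x. ennreal (kern \<sigma> r x * \<sigma> x) \<partial>distr lborel borel ((+) r))"
    by (simp add: lborel_distr_plus)
  also have "\<dots> = (\<integral>\<^sup>+ y. f y \<partial>lborel)"
    unfolding f_def by (subst nn_integral_distr) simp_all
  also have "\<dots> = (\<integral>\<^sup>+ y. indicator log_unit_annulus y *
      (\<integral>\<^sup>+ l. indicator {0<..} l * ennreal (l\<^sup>2) * f (l *\<^sub>R y) \<partial>lborel) \<partial>lborel)"
    using nn_integral_log_unit_annulus_rays[of f] by simp
  also have "\<dots> \<le> (\<integral>\<^sup>+ y. ennreal (3 / (4 * pi)) *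
      (indicator (log_unit_annulus :: (real^3) set) y * ennreal (1 / (DIM(real^3) * norm y ^ DIM(real^3)))) \<partial>lborel)"
  proof (intro nn_integral_mono)
    fix y :: "real^3"
    show "indicator log_unit_annulus y * (\<integral>\<^sup>+ l. indicator {0<..} l * ennreal (l\<^sup>2) * f (l *\<^sub>R y) \<partial>lborel)
        \<le> ennreal (3 / (4 * pi)) * (indicator log_unit_annulus y * ennreal (1 / (DIM(real^3) * norm y ^ DIM(real^3))))"
    proof (cases "y \<in> log_unit_annulus")
      case True
      then have "y \<noteq> 0" using zero_notin_log_unit_annulus by auto
      have "ennreal (1 / (4 * pi * norm y ^ 3)) = ennreal (3 / (4 * pi)) * ennreal (1 / (3 * norm y ^ 3))"
        by (simp add: ennreal_mult[symmetric])
      then show ?thesis using True ray[OF \<open>y \<noteq> 0\<close>] by simp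
    qed simp
  qed
  also have "\<dots> = ennreal (3 / (4 * pi)) * emeasure lborel (ball (0::real^3) 1)"
    by (subst nn_integral_cmult) (simp_all only: nn_integral_log_unit_annulus_inverse_power, measurable)
  also have "emeasure lborel (ball (0::real^3) 1) = ennreal (4 / 3 * pi)"
    using emeasure_lborel_ball_finite[of "0::real^3" 1]
    by (simp add: emeasure_eq_ennreal_measure top.not_eq_extremum sphere_volume)
  also have "ennreal (3 / (4 * pi)) * ennreal (4 / 3 * pi) = 1"
    by (simp add: ennreal_mult[symmetric])
  finally show ?thesis .
qed

lemma kernel_integral_square_le:
  fixes k s f :: "'a \<Rightarrow> real"
  assumes [measurable]: "k \<in> borel_measurable M" "s \<in> borel_measurable M" "f \<in> borel_measurable M"
    and k_nonneg: "\<And>x. 0 \<le> k x" and s_nonneg: "\<And>x. 0 \<le> s x"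
    and f_supp: "\<And>x. s x = 0 \<Longrightarrow> f x = 0"
  shows "ennreal ((\<integral>x. k x * f x \<partial>M)\<^sup>2)
           \<le> (\<integral>\<^sup>+ x. ennreal (k x * s x) \<partial>M) * (\<integral>\<^sup>+ x. ennreal (k x * ((f x)\<^sup>2 / s x)) \<partial>M)"
proof -
  have split: "ennreal \<bar>k x * f x\<bar> = ennreal (sqrt (k x * s x)) * ennreal (sqrt (k x * ((f x)\<^sup>2 / s x)))" for x
  proof (cases "s x = 0")
    case False
    then have "sqrt (k x * s x) * sqrt (k x * ((f x)\<^sup>2 / s x)) = sqrt ((k x * f x)\<^sup>2)"
      using s_nonneg[of x] by (simp add: real_sqrt_mult[symmetric] field_simps power2_eq_square)
    then show ?thesis
      using k_nonneg[of x] s_nonneg[of x] by (simp add: ennreal_mult[symmetric])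
  qed (simp add: f_supp)
  have "ennreal \<bar>\<integral>x. k x * f x \<partial>M\<bar> \<le> (\<integral>\<^sup>+ x. ennreal \<bar>k x * f x\<bar> \<partial>M)"
  proof (cases "integrable M (\<lambda>x. k x * f x)")
    case True
    then show ?thesis using integral_norm_bound_ennreal by fastforce
  qed (simp add: not_integrable_integral_eq)
  then have "(ennreal \<bar>\<integral>x. k x * f x \<partial>M\<bar>)\<^sup>2 \<le> (\<integral>\<^sup>+ x. ennreal \<bar>k x * f x\<bar> \<partial>M)\<^sup>2"
    by (rule power_mono) simp
  then have "ennreal ((\<integral>x. k x * f x \<partial>M)\<^sup>2) \<le> (\<integral>\<^sup>+ x. ennreal \<bar>k x * f x\<bar> \<partial>M)\<^sup>2"
    by (simp add: ennreal_power)
  also have "\<dots> \<le> (\<integral>\<^sup>+ x. (ennreal (sqrt (k x * s x)))\<^sup>2 \<partial>M)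
                  * (\<integral>\<^sup>+ x. (ennreal (sqrt (k x * ((f x)\<^sup>2 / s x))))\<^sup>2 \<partial>M)"
    unfolding split by (rule Cauchy_Schwarz_nn_integral) measurable
  also have "\<dots> = (\<integral>\<^sup>+ x. ennreal (k x * s x) \<partial>M) * (\<integral>\<^sup>+ x. ennreal (k x * ((f x)\<^sup>2 / s x)) \<partial>M)"
    using k_nonneg s_nonneg by (simp add: ennreal_power)
  finally show ?thesis .
qed

lemma nn_integral_weighted_square_kernel_le:
  fixes k :: "'a \<Rightarrow> 'a \<Rightarrow> real" and s f :: "'a \<Rightarrow> real"
  assumes "sigma_finite_measure M"
    and k_meas [measurable]: "(\<lambda>p. k (fst p) (snd p)) \<in> borel_measurable (M \<Otimes>\<^sub>M M)"
    and k_nonneg: "\<And>r x. 0 \<le> k r x" and k_commute: "\<And>r x. k r x = k x r"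
    and [measurable]: "s \<in> borel_measurable M" "f \<in> borel_measurable M"
    and s_nonneg: "\<And>x. 0 \<le> s x" and f_supp: "\<And>x. s x = 0 \<Longrightarrow> f x = 0"
    and row: "\<And>r. (\<integral>\<^sup>+ x. ennreal (k r x * s x) \<partial>M) \<le> 1"
  shows "(\<integral>\<^sup>+ r. ennreal (s r * (\<integral>x. k r x * f x \<partial>M)\<^sup>2) \<partial>M) \<le> (\<integral>\<^sup>+ x. ennreal ((f x)\<^sup>2 / s x) \<partial>M)"
proof -
  interpret pair_sigma_finite M M
    using assms(1) by (simp add: pair_sigma_finite_def)
  define w where "w = (\<lambda>x. (f x)\<^sup>2 / s x)"
  have w_nonneg: "0 \<le> w x" for x unfolding w_def using s_nonneg[of x] by simp
  have [measurable]: "w \<in> borel_measurable M" unfolding w_def by measurable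
  have k_row_meas: "k r \<in> borel_measurable M" if "r \<in> space M" for r
    using measurable_compose[OF measurable_Pair1'[OF that] k_meas] by simp
  have "(\<integral>\<^sup>+ r. ennreal (s r * (\<integral>x. k r x * f x \<partial>M)\<^sup>2) \<partial>M)
      \<le> (\<integral>\<^sup>+ r. ennreal (s r) * (\<integral>\<^sup>+ x. ennreal (k r x * w x) \<partial>M) \<partial>M)"
  proof (intro nn_integral_mono)
    fix r assume "r \<in> space M"
    note [measurable] = k_row_meas[OF this]
    have "ennreal ((\<integral>x. k r x * f x \<partial>M)\<^sup>2)
        \<le> (\<integral>\<^sup>+ x. ennreal (k r x * s x) \<partial>M) * (\<integral>\<^sup>+ x. ennreal (k r x * w x) \<partial>M)"
      unfolding w_def using k_nonneg s_nonneg f_supp by (intro kernel_integral_square_le) simp_all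
    also have "\<dots> \<le> 1 * (\<integral>\<^sup>+ x. ennreal (k r x * w x) \<partial>M)"
      by (intro mult_right_mono row) simp
    finally have "ennreal ((\<integral>x. k r x * f x \<partial>M)\<^sup>2) \<le> 1 * (\<integral>\<^sup>+ x. ennreal (k r x * w x) \<partial>M)" .
    then show "ennreal (s r * (\<integral>x. k r x * f x \<partial>M)\<^sup>2) \<le> ennreal (s r) * (\<integral>\<^sup>+ x. ennreal (k r x * w x) \<partial>M)"
      using s_nonneg[of r] by (simp add: ennreal_mult mult_left_mono)
  qed
  also have "\<dots> = (\<integral>\<^sup>+ r. (\<integral>\<^sup>+ x. ennreal (w x) * ennreal (k x r * s r) \<partial>M) \<partial>M)"
  proof (intro nn_integral_cong)
    fix r assume "r \<in> space M"
    note [measurable] = k_row_meas[OF this]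
    have "ennreal (s r) * (\<integral>\<^sup>+ x. ennreal (k r x * w x) \<partial>M) = (\<integral>\<^sup>+ x. ennreal (s r) * ennreal (k r x * w x) \<partial>M)"
      by (rule nn_integral_cmult[symmetric]) measurable
    also have "\<dots> = (\<integral>\<^sup>+ x. ennreal (w x) * ennreal (k x r * s r) \<partial>M)"
      using s_nonneg w_nonneg k_nonneg
      by (intro nn_integral_cong) (simp add: ennreal_mult[symmetric] k_commute[of r] mult_ac)
    finally show "ennreal (s r) * (\<integral>\<^sup>+ x. ennreal (k r x * w x) \<partial>M) = \<dots>" .
  qed
  also have "\<dots> = (\<integral>\<^sup>+ x. ennreal (w x) * (\<integral>\<^sup>+ r. ennreal (k x r * s r) \<partial>M) \<partial>M)"
    by (subst Fubini') (auto intro!: nn_integral_cong nn_integral_cmult measurable_compose[OF _ measurable_ennreal] borel_measurable_times k_row_meas)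
  also have "\<dots> \<le> (\<integral>\<^sup>+ x. ennreal (w x) * 1 \<partial>M)"
    by (intro nn_integral_mono mult_left_mono row) simp
  finally show ?thesis by (simp add: w_def)
qed

lemma set_borel_measurable_lebesgue_obtain_borel:
  fixes v :: "'a::euclidean_space \<Rightarrow> real"
  assumes "set_borel_measurable lebesgue V v"
  obtains vb where "vb \<in> borel_measurable borel" and "AE x in lborel. x \<in> V \<longrightarrow> v x = vb x"
proof -
  have "(\<lambda>x. indicator V x * v x) \<in> borel_measurable (completion lborel)"
    using assms unfolding set_borel_measurable_def by simp
  then obtain vb where "vb \<in> borel_measurable lborel" and "AE x in lborel. indicator V x * v x = vb x"
    using completion_ex_borel_measurable_real by blast
  then show thesis
    by (intro that) (auto elim: AE_mp)
qed

lemma L2w_sq_eq_lborel: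
  assumes "AE x in lborel. x \<in> V \<longrightarrow> v x = vb x"
  shows "L2w_sq V w v = (\<integral>\<^sup>+ x. ennreal ((vb x)\<^sup>2 * (indicator V x * w x)) \<partial>lborel)"
proof -
  have "AE x in lebesgue. indicator V x * ennreal ((v x)\<^sup>2 * w x) = ennreal ((vb x)\<^sup>2 * (indicator V x * w x))"
    using AE_completion[OF assms] by eventually_elim (simp add: indicator_def)
  then have "L2w_sq V w v = (\<integral>\<^sup>+ x. ennreal ((vb x)\<^sup>2 * (indicator V x * w x)) \<partial>lebesgue)"
    unfolding L2w_sq_def by (rule nn_integral_cong_AE)
  then show ?thesis by (simp add: nn_integral_completion)
qed

lemma AE_le_Linf_norm:
  assumes "V \<in> sets lebesgue"
  shows "AE x in lborel. x \<in> V \<longrightarrow> ennreal \<bar>f x\<bar> \<le> e2ennreal (Linf_norm V f)"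
proof -
  have "AE x in restrict_space lebesgue V. ereal \<bar>f x\<bar> \<le> Linf_norm V f"
    unfolding Linf_norm_def by (rule esssup_AE)
  then have "AE x in lborel. x \<in> V \<longrightarrow> ereal \<bar>f x\<bar> \<le> Linf_norm V f"
    using assms by (simp add: AE_restrict_space_iff AE_completion_iff)
  then show ?thesis
    by eventually_elim (metis e2ennreal_enn2ereal e2ennreal_mono enn2ereal_ennreal abs_ge_zero)
qed

lemma Kop_eq_lborel_integral:
  fixes V :: "(real^3) set" and \<sigma> \<sigma>0 u u0 :: "real^3 \<Rightarrow> real"
  assumes "convex V" and "r \<in> V"
    and [measurable]: "\<sigma>0 \<in> borel_measurable borel" and "\<And>x. x \<in> V \<Longrightarrow> \<sigma>0 x = \<sigma> x"
    and u: "set_borel_measurable lebesgue V u"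
    and [measurable]: "u0 \<in> borel_measurable borel"
    and "\<And>x. x \<notin> V \<Longrightarrow> u0 x = 0" and "AE x in lborel. x \<in> V \<longrightarrow> u x = u0 x"
  shows "Kop \<sigma> V u r = (\<integral>x. kern \<sigma>0 r x * u0 x \<partial>lborel)"
proof -
  have "kern \<sigma> r x = kern \<sigma>0 r x" if "x \<in> V" for x
    using assms(1,2,4) that by (intro kern_cong_convex) auto
  then have "Kop \<sigma> V u r = (\<integral>x. kern \<sigma>0 r x * (indicator V x * u x) \<partial>lebesgue)"
    unfolding Kop_def set_lebesgue_integral_def
    by (intro Bochner_Integration.integral_cong) (auto simp: indicator_def)
  also have "\<dots> = (\<integral>x. kern \<sigma>0 r x * u0 x \<partial>lebesgue)"
  proof (rule integral_cong_AE)
    have "(\<lambda>x. indicator V x * u x) \<in> borel_measurable lebesgue"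
      using u by (simp add: set_borel_measurable_def)
    then show "(\<lambda>x. kern \<sigma>0 r x * (indicator V x * u x)) \<in> borel_measurable lebesgue"
      by (rule borel_measurable_times[OF measurable_completion, rotated]) simp
    show "(\<lambda>x. kern \<sigma>0 r x * u0 x) \<in> borel_measurable lebesgue"
      by (intro measurable_completion) simp
    show "AE x in lebesgue. kern \<sigma>0 r x * (indicator V x * u x) = kern \<sigma>0 r x * u0 x"
      using AE_completion[OF assms(8)] by eventually_elim (simp add: indicator_def assms(7))
  qed
  also have "\<dots> = (\<integral>x. kern \<sigma>0 r x * u0 x \<partial>lborel)"
    by (intro integral_completion) simp
  finally show ?thesis .
qed

lemma L2w_sq_Kop_mult_le:
  fixes V :: "(real^3) set" and \<sigma> \<tau> v :: "real^3 \<Rightarrow> real"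
  assumes "convex V" and V_borel: "V \<in> sets borel"
    and \<sigma>_meas: "set_borel_measurable borel V \<sigma>" and \<sigma>_pos: "\<And>x. x \<in> V \<Longrightarrow> 0 < \<sigma> x"
    and \<sigma>_le: "\<And>x. x \<in> V \<Longrightarrow> \<sigma> x \<le> C"
    and \<tau>_meas: "set_borel_measurable borel V \<tau>" and v_meas: "set_borel_measurable lebesgue V v"
  shows "L2w_sq V \<sigma> (Kop \<sigma> V (\<lambda>r. \<tau> r * v r))
           \<le> (e2ennreal (Linf_norm V (\<lambda>r. \<tau> r / \<sigma> r)))\<^sup>2 * L2w_sq V \<sigma> v"
proof -
  define M where "M = e2ennreal (Linf_norm V (\<lambda>r. \<tau> r / \<sigma> r))"
  define \<sigma>0 where "\<sigma>0 = (\<lambda>x. indicator V x * \<sigma> x)"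
  define \<tau>0 where "\<tau>0 = (\<lambda>x. indicator V x * \<tau> x)"
  obtain vb where [measurable]: "vb \<in> borel_measurable borel" and vb: "AE x in lborel. x \<in> V \<longrightarrow> v x = vb x"
    using set_borel_measurable_lebesgue_obtain_borel[OF v_meas] by blast
  define u0 where "u0 = (\<lambda>x. \<tau>0 x * vb x)"
  have \<sigma>0_meas [measurable]: "\<sigma>0 \<in> borel_measurable borel" and [measurable]: "\<tau>0 \<in> borel_measurable borel"
    using \<sigma>_meas \<tau>_meas by (simp_all add: \<sigma>0_def \<tau>0_def set_borel_measurable_def)
  have u0_meas [measurable]: "u0 \<in> borel_measurable borel" unfolding u0_def by measurable
  have \<sigma>0_nonneg: "0 \<le> \<sigma>0 x" for x
    using \<sigma>_pos[of x] by (simp add: \<sigma>0_def indicator_def less_imp_le)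
  have u0_supp: "u0 x = 0" if "\<sigma>0 x = 0" for x
    using that \<sigma>_pos[of x] by (auto simp: \<sigma>0_def \<tau>0_def u0_def indicator_def split: if_splits)
  have "set_borel_measurable lebesgue V (\<lambda>r. \<tau> r * v r)"
  proof -
    have "(\<lambda>x. indicator V x * v x) \<in> borel_measurable lebesgue"
      using v_meas by (simp add: set_borel_measurable_def)
    then have "(\<lambda>x. \<tau>0 x * (indicator V x * v x)) \<in> borel_measurable lebesgue"
      by (rule borel_measurable_times[OF measurable_completion, rotated]) simp
    moreover have "(\<lambda>x. \<tau>0 x * (indicator V x * v x)) = (\<lambda>x. indicator V x *\<^sub>R (\<tau> x * v x))"
      by (auto simp: \<tau>0_def indicator_def)
    ultimately show ?thesis
      unfolding set_borel_measurable_def by simp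
  qed
  then have "Kop \<sigma> V (\<lambda>r. \<tau> r * v r) r = (\<integral>x. kern \<sigma>0 r x * u0 x \<partial>lborel)" if "r \<in> V" for r
    using \<open>convex V\<close> that vb
    by (intro Kop_eq_lborel_integral[OF _ _ \<sigma>0_meas _ _ u0_meas])
       (auto simp: \<sigma>0_def \<tau>0_def u0_def elim: AE_mp)
  then have "L2w_sq V \<sigma> (Kop \<sigma> V (\<lambda>r. \<tau> r * v r))
      = (\<integral>\<^sup>+ r. ennreal (\<sigma>0 r * (\<integral>x. kern \<sigma>0 r x * u0 x \<partial>lborel)\<^sup>2) \<partial>lborel)"
    by (subst L2w_sq_eq_lborel[where vb="\<lambda>r. \<integral>x. kern \<sigma>0 r x * u0 x \<partial>lborel"])
       (auto simp: \<sigma>0_def mult_ac)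
  also have "\<dots> \<le> (\<integral>\<^sup>+ x. ennreal ((u0 x)\<^sup>2 / \<sigma>0 x) \<partial>lborel)"
  proof (rule nn_integral_weighted_square_kernel_le)
    show "(\<lambda>p. kern \<sigma>0 (fst p) (snd p)) \<in> borel_measurable (lborel \<Otimes>\<^sub>M lborel)"
      by measurable
    show "(\<integral>\<^sup>+ x. ennreal (kern \<sigma>0 r x * \<sigma>0 x) \<partial>lborel) \<le> 1" for r
      using \<sigma>_le by (intro nn_integral_kern_weight_le_one[OF \<sigma>0_meas \<sigma>0_nonneg, where C="max C 0"])
        (simp add: \<sigma>0_def indicator_def le_max_iff_disj)
  qed (auto simp: kern_nonneg kern_commute \<sigma>0_nonneg u0_supp lborel.sigma_finite_measure_axioms)
  also have "\<dots> \<le> (\<integral>\<^sup>+ x. M\<^sup>2 * ennreal ((vb x)\<^sup>2 * \<sigma>0 x) \<partial>lborel)"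
  proof (rule nn_integral_mono_AE)
    have "V \<in> sets lebesgue" using V_borel by (simp add: sets_completionI_sets)
    from AE_le_Linf_norm[OF this, of "\<lambda>r. \<tau> r / \<sigma> r"]
    show "AE x in lborel. ennreal ((u0 x)\<^sup>2 / \<sigma>0 x) \<le> M\<^sup>2 * ennreal ((vb x)\<^sup>2 * \<sigma>0 x)"
    proof eventually_elim
      case (elim x)
      show ?case
      proof (cases "x \<in> V")
        case True
        have "(u0 x)\<^sup>2 / \<sigma>0 x = ((vb x)\<^sup>2 * \<sigma>0 x) * \<bar>\<tau> x / \<sigma> x\<bar>\<^sup>2"
          using \<sigma>_pos[OF True] True by (simp add: u0_def \<tau>0_def \<sigma>0_def field_simps power2_eq_square)
        also have "ennreal \<dots> = ennreal ((vb x)\<^sup>2 * \<sigma>0 x) * (ennreal \<bar>\<tau> x / \<sigma> x\<bar>)\<^sup>2"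
          using \<sigma>0_nonneg[of x] by (simp add: ennreal_mult ennreal_power)
        also have "\<dots> \<le> ennreal ((vb x)\<^sup>2 * \<sigma>0 x) * M\<^sup>2"
          using elim True unfolding M_def by (intro mult_left_mono power_mono) auto
        finally show ?thesis by (simp add: mult.commute)
      qed (simp add: u0_def \<tau>0_def)
    qed
  qed
  also have "\<dots> = M\<^sup>2 * (\<integral>\<^sup>+ x. ennreal ((vb x)\<^sup>2 * \<sigma>0 x) \<partial>lborel)"
    by (rule nn_integral_cmult) measurable
  also have "\<dots> = M\<^sup>2 * L2w_sq V \<sigma> v"
    by (simp add: L2w_sq_eq_lborel[OF vb] \<sigma>0_def)
  finally show ?thesis unfolding M_def .
qed

lemma set_borel_measurable_add:
  fixes f g :: "'a \<Rightarrow> real"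
  assumes "set_borel_measurable M S f" and "set_borel_measurable M S g"
  shows "set_borel_measurable M S (\<lambda>x. f x + g x)"
  using borel_measurable_add[OF assms[unfolded set_borel_measurable_def]]
  unfolding set_borel_measurable_def by (simp add: distrib_left)

theorem theorem1:
  fixes V :: "(real^3) set"
    and \<sigma>S \<sigma>A \<sigma>star :: "real^3 \<Rightarrow> real"
    and sSmin sSmax sAmin sAmax sstmin sstmax :: real
  assumes V_open: "open V" and V_bounded: "bounded V" and V_convex: "convex V" and V_ne: "V \<noteq> {}"
    and \<sigma>S_meas: "set_borel_measurable borel V \<sigma>S"
    and \<sigma>A_meas: "set_borel_measurable borel V \<sigma>A"
    and \<sigma>star_meas: "set_borel_measurable borel V \<sigma>star"
    and sS_pos: "0 < sSmin" and \<sigma>S_bnd: "\<forall>r\<in>V. sSmin \<le> \<sigma>S r \<and> \<sigma>S r \<le> sSmax"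
    and sA_pos: "0 < sAmin" and \<sigma>A_bnd: "\<forall>r\<in>V. sAmin \<le> \<sigma>A r \<and> \<sigma>A r \<le> sAmax"
    and sst_pos: "0 < sstmin" and \<sigma>star_bnd: "\<forall>r\<in>V. sstmin \<le> \<sigma>star r \<and> \<sigma>star r \<le> sstmax"
  shows "\<forall>v. set_borel_measurable lebesgue V v \<longrightarrow>
           L2w_sq V (\<lambda>r. \<sigma>S r + \<sigma>A r) v < \<infinity> \<longrightarrow>
           L2w_sq V (\<lambda>r. \<sigma>S r + \<sigma>A r) (Kop (\<lambda>r. \<sigma>S r + \<sigma>A r) V (\<lambda>r. \<sigma>star r * v r))
             \<le> (e2ennreal (Linf_norm V (\<lambda>r. \<sigma>star r / (\<sigma>S r + \<sigma>A r))))\<^sup>2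
                * L2w_sq V (\<lambda>r. \<sigma>S r + \<sigma>A r) v"
proof (intro allI impI)
  fix v :: "real^3 \<Rightarrow> real"
  assume "set_borel_measurable lebesgue V v"
  moreover have "0 < \<sigma>S r + \<sigma>A r" and "\<sigma>S r + \<sigma>A r \<le> sSmax + sAmax" if "r \<in> V" for r
    using that sS_pos sA_pos \<sigma>S_bnd \<sigma>A_bnd by fastforce+
  ultimately show "L2w_sq V (\<lambda>r. \<sigma>S r + \<sigma>A r) (Kop (\<lambda>r. \<sigma>S r + \<sigma>A r) V (\<lambda>r. \<sigma>star r * v r))
      \<le> (e2ennreal (Linf_norm V (\<lambda>r. \<sigma>star r / (\<sigma>S r + \<sigma>A r))))\<^sup>2 * L2w_sq V (\<lambda>r. \<sigma>S r + \<sigma>A r) v"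
    using V_convex V_open \<sigma>star_meas set_borel_measurable_add[OF \<sigma>S_meas \<sigma>A_meas]
    by (intro L2w_sq_Kop_mult_le) auto
qed

end
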